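(* The variety $\mathsf{V}(S_{(4,479)})$ is the ai-semiring variety defined by the identities $x^3\approx x^2$, $xy\approx yx$, $xy\approx x^2y$, $xyz\approx xyz+xy$, $x_1x_2+x_3x_4\approx x_1x_2x_3x_4$.
   Context: An ai-semiring is an algebra $(S,+,\cdot)$ with $(S,+)$ a semilattice, $(S,\cdot)$ a semigroup, and both distributive laws. $\mathsf{V}(S)$ is the variety generated by $S$; "the ai-semiring variety defined by identities $\Sigma$" is the class of all ai-semirings satisfying $\Sigma$. $S_{(4,479)}$ has carrier $\{1,2,3,4\}$; addition: $x+x=x$, $2+x=x$, $1+x=1$ for all $x$, $3+4=1$; multiplication (row $a$, column $b$ gives $a\cdot b$): row $1$: $3,3,3,3$; row $2$: $3,2,3,3$; row $3$: $3,3,3,3$; row $4$: $3,3,3,3$. *)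

theory Defs
  imports Main
begin

definition ai_semiring :: "('a \<Rightarrow> 'a \<Rightarrow> 'a) \<Rightarrow> ('a \<Rightarrow> 'a \<Rightarrow> 'a) \<Rightarrow> bool" where
  "ai_semiring pl ml \<longleftrightarrow>
     (\<forall>x y z. pl (pl x y) z = pl x (pl y z)) \<and>
     (\<forall>x y. pl x y = pl y x) \<and>
     (\<forall>x. pl x x = x) \<and>
     (\<forall>x y z. ml (ml x y) z = ml x (ml y z)) \<and>
     (\<forall>x y z. ml x (pl y z) = pl (ml x y) (ml x z)) \<and>
     (\<forall>x y z. ml (pl y z) x = pl (ml y x) (ml z x))"

datatype trm = Var nat | Add trm trm | Mul trm trm

primrec eval :: "('a \<Rightarrow> 'a \<Rightarrow> 'a) \<Rightarrow> ('a \<Rightarrow> 'a \<Rightarrow> 'a) \<Rightarrow> (nat \<Rightarrow> 'a) \<Rightarrow> trm \<Rightarrow> 'a" where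
  "eval pl ml \<rho> (Var n) = \<rho> n"
| "eval pl ml \<rho> (Add s t) = pl (eval pl ml \<rho> s) (eval pl ml \<rho> t)"
| "eval pl ml \<rho> (Mul s t) = ml (eval pl ml \<rho> s) (eval pl ml \<rho> t)"

definition holds :: "('a \<Rightarrow> 'a \<Rightarrow> 'a) \<Rightarrow> ('a \<Rightarrow> 'a \<Rightarrow> 'a) \<Rightarrow> trm \<Rightarrow> trm \<Rightarrow> bool" where
  "holds pl ml u v \<longleftrightarrow> (\<forall>\<rho>. eval pl ml \<rho> u = eval pl ml \<rho> v)"

datatype s4 = E1 | E2 | E3 | E4

fun s_add :: "s4 \<Rightarrow> s4 \<Rightarrow> s4" where
  "s_add E1 _ = E1"
| "s_add _ E1 = E1"
| "s_add E2 y = y"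
| "s_add x E2 = x"
| "s_add E3 E3 = E3"
| "s_add E4 E4 = E4"
| "s_add E3 E4 = E1"
| "s_add E4 E3 = E1"

fun s_mul :: "s4 \<Rightarrow> s4 \<Rightarrow> s4" where
  "s_mul E2 E2 = E2"
| "s_mul _ _ = E3"

(* Membership in the variety V(S) generated by S: by definition (Birkhoff),
   the class of all algebras satisfying every identity satisfied by S. *)
definition in_V_S :: "('a \<Rightarrow> 'a \<Rightarrow> 'a) \<Rightarrow> ('a \<Rightarrow> 'a \<Rightarrow> 'a) \<Rightarrow> bool" where
  "in_V_S pl ml \<longleftrightarrow> (\<forall>u v. holds s_add s_mul u v \<longrightarrow> holds pl ml u v)"

definition sigma_holds :: "('a \<Rightarrow> 'a \<Rightarrow> 'a) \<Rightarrow> ('a \<Rightarrow> 'a \<Rightarrow> 'a) \<Rightarrow> bool" where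
  "sigma_holds pl ml \<longleftrightarrow>
     (\<forall>x. ml (ml x x) x = ml x x) \<and>
     (\<forall>x y. ml x y = ml y x) \<and>
     (\<forall>x y. ml x y = ml (ml x x) y) \<and>
     (\<forall>x y z. ml (ml x y) z = pl (ml (ml x y) z) (ml x y)) \<and>
     (\<forall>x1 x2 x3 x4. pl (ml x1 x2) (ml x3 x4) = ml (ml (ml x1 x2) x3) x4)"

end

theory Submission
  imports Defs
begin

(* In an ai-semiring satisfying the identities, xy = x^2 + y^2, and squaring is additive and
   idempotent.  Hence every term t evaluates to the join of the x for the variables x occurring
   in t as bare summands and of the x^2 for the variables x occurring in t inside a product;
   call this set of "monomials" the content of t.  Terms with equal content are therefore
   identified by every such algebra.  S_(4,479) is such an algebra, and it separates terms of
   different content: sending x to 4 and every other variable to 2, a term takes a value in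
   {1,4} iff x is a bare summand of it, and a value in {1,3} iff x occurs in one of its products. *)

fun vars :: "trm \<Rightarrow> nat set" where
  "vars (Var n) = {n}"
| "vars (Add s t) = vars s \<union> vars t"
| "vars (Mul s t) = vars s \<union> vars t"

(* Inl n stands for the monomial x_n, Inr n for x_n^2. *)
fun content :: "trm \<Rightarrow> (nat + nat) set" where
  "content (Var n) = {Inl n}"
| "content (Add s t) = content s \<union> content t"
| "content (Mul s t) = Inr ` (vars s \<union> vars t)"

lemma finite_vars: "finite (vars t)"
  by (induction t) auto

lemma vars_nonempty: "vars t \<noteq> {}"
  by (induction t) auto

lemma finite_content: "finite (content t)"
  by (induction t) (auto simp: finite_vars)

lemma content_nonempty: "content t \<noteq> {}"
  by (induction t) (auto simp: vars_nonempty)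

lemma image_case_sum_content: "case_sum id id ` content t = vars t"
  by (induction t) (auto simp: image_Un image_image)

definition monomial :: "('a \<Rightarrow> 'a \<Rightarrow> 'a) \<Rightarrow> (nat \<Rightarrow> 'a) \<Rightarrow> nat + nat \<Rightarrow> 'a" where
  "monomial ml \<rho> c = (case c of Inl n \<Rightarrow> \<rho> n | Inr n \<Rightarrow> ml (\<rho> n) (\<rho> n))"

locale sigma_semiring =
  fixes pl ml :: "'a \<Rightarrow> 'a \<Rightarrow> 'a"
  assumes ai_semiring: "ai_semiring pl ml"
    and sigma_holds: "sigma_holds pl ml"
begin

sublocale join: semilattice_set pl
  using ai_semiring unfolding ai_semiring_def by unfold_locales auto

lemma mul_assoc: "ml (ml x y) z = ml x (ml y z)"
  using ai_semiring unfolding ai_semiring_def by blast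

lemma mul_eq_sum_squares: "ml a b = pl (ml a a) (ml b b)"
proof -
  have comm: "\<And>x y. ml x y = ml y x" and square_left: "\<And>x y. ml x y = ml (ml x x) y"
    using sigma_holds unfolding sigma_holds_def by blast+
  have "ml a b = ml (ml a a) (ml b b)"
    by (metis comm square_left)
  also have "\<dots> = pl (ml a a) (ml b b)"
    using sigma_holds unfolding sigma_holds_def by (metis mul_assoc)
  finally show ?thesis .
qed

lemma square_square: "ml (ml a a) (ml a a) = ml a a"
  using sigma_holds unfolding sigma_holds_def by (metis mul_assoc)

lemma square_add: "ml (pl a b) (pl a b) = pl (ml a a) (ml b b)"
proof -
  have "ml (pl a b) (pl a b) = pl (pl (ml a a) (ml b a)) (pl (ml a b) (ml b b))"
    using ai_semiring unfolding ai_semiring_def by simp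
  then show ?thesis
    by (simp add: mul_eq_sum_squares[of a b] mul_eq_sum_squares[of b a]
        join.assoc join.commute join.left_commute)
qed

lemma square_join_monomials:
  fixes \<rho> :: "nat \<Rightarrow> 'a" and t :: trm
  defines "m \<equiv> join.F (monomial ml \<rho> ` content t)"
  shows "ml m m = join.F ((\<lambda>n. ml (\<rho> n) (\<rho> n)) ` vars t)"
proof -
  have "ml m m = join.F ((\<lambda>a. ml a a) ` monomial ml \<rho> ` content t)"
    unfolding m_def
    by (rule join.hom_commute) (auto simp: square_add finite_content content_nonempty)
  also have "(\<lambda>a. ml a a) ` monomial ml \<rho> ` content t
      = (\<lambda>n. ml (\<rho> n) (\<rho> n)) ` case_sum id id ` content t"
    by (force simp: image_image monomial_def square_square split: sum.split)
  finally show ?thesis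
    by (simp add: image_case_sum_content)
qed

lemma eval_normal_form: "eval pl ml \<rho> t = join.F (monomial ml \<rho> ` content t)"
proof (induction t)
  case (Var n)
  then show ?case by (simp add: monomial_def)
next
  case (Add s t)
  then show ?case by (simp add: image_Un join.union finite_content content_nonempty)
next
  case (Mul s t)
  let ?h = "\<lambda>n. ml (\<rho> n) (\<rho> n)"
  have "eval pl ml \<rho> (Mul s t)
      = pl (ml (eval pl ml \<rho> s) (eval pl ml \<rho> s)) (ml (eval pl ml \<rho> t) (eval pl ml \<rho> t))"
    unfolding eval.simps by (rule mul_eq_sum_squares)
  also have "\<dots> = join.F (?h ` (vars s \<union> vars t))"
    by (simp add: Mul square_join_monomials image_Un join.union finite_vars vars_nonempty)
  also have "?h ` (vars s \<union> vars t) = monomial ml \<rho> ` content (Mul s t)"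
    by (auto simp: monomial_def image_image)
  finally show ?case .
qed

lemma holds_if_content_eq: "content u = content v \<Longrightarrow> holds pl ml u v"
  by (simp add: holds_def eval_normal_form)

end

interpretation S: sigma_semiring s_add s_mul
proof
  have "s_add (s_add x y) z = s_add x (s_add y z)" "s_add x y = s_add y x" "s_add x x = x"
    "s_mul (s_mul x y) z = s_mul x (s_mul y z)"
    "s_mul x (s_add y z) = s_add (s_mul x y) (s_mul x z)"
    "s_mul (s_add y z) x = s_add (s_mul y x) (s_mul z x)" for x y z
    by (cases x; cases y; cases z; simp)+
  then show "ai_semiring s_add s_mul"
    unfolding ai_semiring_def by blast
  have "s_mul (s_mul x x) x = s_mul x x" "s_mul x y = s_mul y x" "s_mul x y = s_mul (s_mul x x) y"
    "s_mul (s_mul x y) z = s_add (s_mul (s_mul x y) z) (s_mul x y)"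
    "s_add (s_mul x y) (s_mul z w) = s_mul (s_mul (s_mul x y) z) w" for x y z w
    by (cases x; cases y; cases z; cases w; simp)+
  then show "sigma_holds s_add s_mul"
    unfolding sigma_holds_def by blast
qed

definition mark :: "nat \<Rightarrow> nat \<Rightarrow> s4" where
  "mark x n = (if n = x then E4 else E2)"

lemma eval_mark_eq_E2_iff: "eval s_add s_mul (mark x) t = E2 \<longleftrightarrow> x \<notin> vars t"
proof (induction t)
  case (Add s t)
  have "s_add a b = E2 \<longleftrightarrow> a = E2 \<and> b = E2" for a b
    by (cases a; cases b; simp)
  with Add show ?case by simp
next
  case (Mul s t)
  have "s_mul a b = E2 \<longleftrightarrow> a = E2 \<and> b = E2" for a b
    by (cases a; cases b; simp)
  with Mul show ?case by simp
qed (simp add: mark_def)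

lemma eval_mark_summand_iff: "eval s_add s_mul (mark x) t \<in> {E1, E4} \<longleftrightarrow> Inl x \<in> content t"
proof (induction t)
  case (Add s t)
  have "s_add a b \<in> {E1, E4} \<longleftrightarrow> a \<in> {E1, E4} \<or> b \<in> {E1, E4}" for a b
    by (cases a; cases b; simp)
  with Add show ?case by (simp only: eval.simps content.simps Un_iff)
next
  case (Mul s t)
  have "s_mul a b \<notin> {E1, E4}" for a b
    by (cases a; cases b; simp)
  then show ?case by auto
qed (simp add: mark_def)

lemma eval_mark_product_iff: "eval s_add s_mul (mark x) t \<in> {E1, E3} \<longleftrightarrow> Inr x \<in> content t"
proof (induction t)
  case (Add s t)
  have "s_add a b \<in> {E1, E3} \<longleftrightarrow> a \<in> {E1, E3} \<or> b \<in> {E1, E3}" for a b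
    by (cases a; cases b; simp)
  with Add show ?case by (simp only: eval.simps content.simps Un_iff)
next
  case (Mul s t)
  have "s_mul a b \<in> {E1, E3} \<longleftrightarrow> a \<noteq> E2 \<or> b \<noteq> E2" for a b
    by (cases a; cases b; simp)
  then show ?case by (auto simp: eval_mark_eq_E2_iff)
qed (simp add: mark_def)

lemma holds_S_iff_content_eq: "holds s_add s_mul u v \<longleftrightarrow> content u = content v"
proof
  assume "holds s_add s_mul u v"
  then have "eval s_add s_mul (mark x) u = eval s_add s_mul (mark x) v" for x
    unfolding holds_def by blast
  then show "content u = content v"
    by (metis eval_mark_summand_iff eval_mark_product_iff sumE set_eqI)
qed (rule S.holds_if_content_eq)

lemma in_V_S_iff_content_eq_imp_holds:
  "in_V_S pl ml \<longleftrightarrow> (\<forall>u v. content u = content v \<longrightarrow> holds pl ml u v)"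
  unfolding in_V_S_def holds_S_iff_content_eq ..

lemma (in sigma_semiring) in_V_S: "in_V_S pl ml"
  by (simp add: in_V_S_iff_content_eq_imp_holds holds_if_content_eq)

notation Add (infixl "\<oplus>" 65) and Mul (infixl "\<odot>" 70)

lemma in_V_S_eval_eq_if_content_eq:
  assumes "in_V_S pl ml" and "content u = content v"
  shows "eval pl ml \<rho> u = eval pl ml \<rho> v"
  using assms unfolding in_V_S_iff_content_eq_imp_holds holds_def by blast

lemma in_V_S_ai_semiring:
  assumes V: "in_V_S pl ml"
  shows "ai_semiring pl ml"
proof -
  note eq = in_V_S_eval_eq_if_content_eq[OF V]
  have "pl (pl x y) z = pl x (pl y z)"
    "ml (ml x y) z = ml x (ml y z)"
    "ml x (pl y z) = pl (ml x y) (ml x z)"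
    "ml (pl y z) x = pl (ml y x) (ml z x)" for x y z
    using eq[of "(Var 0 \<oplus> Var 1) \<oplus> Var 2" "Var 0 \<oplus> (Var 1 \<oplus> Var 2)" "(!) [x, y, z]"]
      eq[of "(Var 0 \<odot> Var 1) \<odot> Var 2" "Var 0 \<odot> (Var 1 \<odot> Var 2)" "(!) [x, y, z]"]
      eq[of "Var 0 \<odot> (Var 1 \<oplus> Var 2)" "Var 0 \<odot> Var 1 \<oplus> Var 0 \<odot> Var 2" "(!) [x, y, z]"]
      eq[of "(Var 1 \<oplus> Var 2) \<odot> Var 0" "Var 1 \<odot> Var 0 \<oplus> Var 2 \<odot> Var 0" "(!) [x, y, z]"]
    by (simp_all add: insert_commute)
  moreover have "pl x y = pl y x" "pl x x = x" for x y
    using eq[of "Var 0 \<oplus> Var 1" "Var 1 \<oplus> Var 0" "(!) [x, y]"]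
      eq[of "Var 0 \<oplus> Var 0" "Var 0" "(!) [x]"]
    by (simp_all add: insert_commute)
  ultimately show ?thesis
    unfolding ai_semiring_def by blast
qed

lemma in_V_S_sigma_holds:
  assumes V: "in_V_S pl ml"
  shows "sigma_holds pl ml"
proof -
  note eq = in_V_S_eval_eq_if_content_eq[OF V]
  have "ml (ml x x) x = ml x x"
    "ml x y = ml y x"
    "ml x y = ml (ml x x) y"
    "ml (ml x y) z = pl (ml (ml x y) z) (ml x y)"
    "pl (ml x y) (ml z w) = ml (ml (ml x y) z) w" for x y z w
    using eq[of "Var 0 \<odot> Var 0 \<odot> Var 0" "Var 0 \<odot> Var 0" "(!) [x]"]
      eq[of "Var 0 \<odot> Var 1" "Var 1 \<odot> Var 0" "(!) [x, y]"]
      eq[of "Var 0 \<odot> Var 1" "Var 0 \<odot> Var 0 \<odot> Var 1" "(!) [x, y]"]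
      eq[of "Var 0 \<odot> Var 1 \<odot> Var 2" "Var 0 \<odot> Var 1 \<odot> Var 2 \<oplus> Var 0 \<odot> Var 1" "(!) [x, y, z]"]
      eq[of "Var 0 \<odot> Var 1 \<oplus> Var 2 \<odot> Var 3" "Var 0 \<odot> Var 1 \<odot> Var 2 \<odot> Var 3" "(!) [x, y, z, w]"]
    by (simp_all add: insert_commute)
  then show ?thesis
    unfolding sigma_holds_def by blast
qed

theorem proposition6p8:
  fixes pl ml :: "'a \<Rightarrow> 'a \<Rightarrow> 'a"
  shows "in_V_S pl ml \<longleftrightarrow> (ai_semiring pl ml \<and> sigma_holds pl ml)"
proof
  assume "in_V_S pl ml"
  then show "ai_semiring pl ml \<and> sigma_holds pl ml"
    by (simp add: in_V_S_ai_semiring in_V_S_sigma_holds)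
next
  assume "ai_semiring pl ml \<and> sigma_holds pl ml"
  then interpret sigma_semiring pl ml
    by unfold_locales blast+
  show "in_V_S pl ml"
    by (rule in_V_S)
qed

end
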